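(* Let $\Lambda$ be a cohomology algebra of $b^+=1$ type with $I_T=0$ and $\Gamma\cong\langle1\rangle\oplus n\langle-1\rangle$, $0\le n\le9$, with orthogonal basis $\{H,E_1,\dots,E_n\}$, $H\cdot H=1$, $E_i\cdot E_i=-1$. Let $A=aH-\sum_{i=1}^nb_iE_i\ne0$ be reduced with $A\cdot A\ge0$. Then $h(A)=0$ exactly when $A\in\{H-E_1,\ H,\ 2H\}$ or $a=b_1+1$ with $b_1\ge1$, $b_2\in\{0,1\}$, $b_i=0$ for $i\ge3$; and $h(A)<0$ exactly when $A=a(H-E_1)$ with $a\ge2$. For all other such $A$, $h(A)>0$.
   Context: Notation: $\Lambda$ a cohomology algebra (graded commutative algebra over $\mathbb{Z}$, free of finite rank in each degree, $p:\Lambda^4\cong\mathbb{Z}$ with perfect pairings); $\Gamma(x,y)=x\cdot y=p(xy)$ on $\Lambda^2$, signature $\sigma$; $I_T\subseteq\Lambda^2$ generated by products of elements of $\Lambda^1$. Characteristic: $c\cdot A\equiv A\cdot A\pmod 2$ for all $A$. Since $I_T=0$, adjunction classes are the characteristic $c$ with $c\cdot c>\sigma$. $h_c(A)=1+\frac{A\cdot A-|c\cdot A|}{2}$ for $A\ne0$, $h_c(0)=0$; $h(A)=\max_c h_c(A)$ over adjunction classes. $A=aH-\sum b_iE_i$ is reduced if $b_1\ge\dots\ge b_n\ge0$ and $a\ge b_1$ ($n=1$), $a\ge b_1+b_2$ ($n=2$), $a\ge b_1+b_2+b_3$ ($n\ge3$), $a\ge0$ ($n=0$); coefficients $b_i$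 with $i>n$ are taken to be $0$. *)

theory Defs
  imports Main
begin

text \<open>The lattice Gamma = <1> + n<-1> in the orthogonal basis H, E_1, ..., E_n.
  A class is a pair (a, b) standing for  a H - sum_{i=1..n} b_i E_i.
  Only b_i with 1 <= i <= n may be nonzero.\<close>

type_synonym cls = "int \<times> (nat \<Rightarrow> int)"

definition in_Gamma :: "nat \<Rightarrow> cls \<Rightarrow> bool" where
  "in_Gamma n A \<longleftrightarrow> (\<forall>i. (i = 0 \<or> n < i) \<longrightarrow> snd A i = 0)"

definition zero_cls :: cls where
  "zero_cls = (0, \<lambda>_. 0)"

definition dot :: "nat \<Rightarrow> cls \<Rightarrow> cls \<Rightarrow> int" where
  "dot n A B = fst A * fst B - (\<Sum>i=1..n. snd A i * snd B i)"

definition signature :: "nat \<Rightarrow> int" where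
  "signature n = 1 - int n"

definition characteristic :: "nat \<Rightarrow> cls \<Rightarrow> bool" where
  "characteristic n c \<longleftrightarrow> in_Gamma n c \<and>
     (\<forall>A. in_Gamma n A \<longrightarrow> dot n c A mod 2 = dot n A A mod 2)"

text \<open>Since I_T = 0, adjunction classes are characteristic c with c.c > sigma.\<close>
definition adjunction_class :: "nat \<Rightarrow> cls \<Rightarrow> bool" where
  "adjunction_class n c \<longleftrightarrow> characteristic n c \<and> dot n c c > signature n"

text \<open>h_c(A) = 1 + (A.A - |c.A|)/2 for A nonzero, h_c(0) = 0.  For characteristic c
  the numerator is even, so integer division is exact.\<close>
definition h_c :: "nat \<Rightarrow> cls \<Rightarrow> cls \<Rightarrow> int" where
  "h_c n c A = (if A = zero_cls then 0 else 1 + (dot n A A - \<bar>dot n c A\<bar>) div 2)"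

definition h :: "nat \<Rightarrow> cls \<Rightarrow> int" where
  "h n A = (GREATEST k. \<exists>c. adjunction_class n c \<and> k = h_c n c A)"

definition reduced :: "nat \<Rightarrow> cls \<Rightarrow> bool" where
  "reduced n A \<longleftrightarrow>
     (let a = fst A; b = snd A in
       (\<forall>i j. 1 \<le> i \<longrightarrow> i \<le> j \<longrightarrow> j \<le> n \<longrightarrow> b j \<le> b i) \<and>
       (\<forall>i. 1 \<le> i \<longrightarrow> i \<le> n \<longrightarrow> 0 \<le> b i) \<and>
       (if n = 0 then a \<ge> 0
        else if n = 1 then a \<ge> b 1
        else if n = 2 then a \<ge> b 1 + b 2
        else a \<ge> b 1 + b 2 + b 3))"

definition H_cls :: cls where "H_cls = (1, \<lambda>_. 0)"
definition twoH_cls :: cls where "twoH_cls = (2, \<lambda>_. 0)"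
definition H_minus_E1 :: cls where "H_minus_E1 = (1, (\<lambda>_. 0)(1 := 1))"
definition mult_H_minus_E1 :: "int \<Rightarrow> cls" where
  "mult_H_minus_E1 k = (k, (\<lambda>_. 0)(1 := k))"

end

theory Submission
  imports Defs
begin

text \<open>For a reduced class A = aH - \<Sum> b_i E_i with n \<le> 9, the maximum defining h(A) is attained
  at the anticanonical class K = 3H - \<Sum> E_i: writing an adjunction class, up to sign, as
  c = (2m + 3)H - \<Sum> \<plusminus>(2e_i + 1)E_i, the condition c \<cdot> c > 1 - n bounds \<Sum> e_i(e_i + 1) by m^2 + 3m,
  hence e_i \<le> m and \<Sum> e_i \<le> 3m, and for reduced b this gives \<Sum> e_i b_i \<le> ma, i.e. |c \<cdot> A| \<ge> K \<cdot> A \<ge> 0.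
  Therefore 2h(A) = A \<cdot> A - K \<cdot> A + 2 = a^2 - 3a - \<Sum> b_i(b_i - 1) + 2, and the classification follows
  from the gap a - b_1: gap 0 forces A = a(H - E_1) with h(A) = 1 - a, gap 1 gives h(A) = 0, and for
  gap at least 2 the condition A \<cdot> A \<ge> 0 makes h(A) positive unless A = 2H.\<close>

lemma sum_le_first_two:
  fixes f :: "nat \<Rightarrow> 'a::ordered_comm_monoid_add"
  assumes "\<And>i. 3 \<le> i \<Longrightarrow> f i \<le> 0" and "0 \<le> f 1" and "0 \<le> f 2"
  shows "sum f {1..n} \<le> f 1 + f 2"
proof (induction n)
  case 0
  show ?case using assms(2,3) by (simp add: add_nonneg_nonneg)
next
  case (Suc n)
  consider "n = 0" | "n = 1" | "2 \<le> n" by linarith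
  then show ?case
  proof cases
    case 1
    then show ?thesis using assms(3) by (simp add: add_increasing2)
  next
    case 2
    then show ?thesis by (simp add: sum.cl_ivl_Suc numeral_2_eq_2)
  next
    case 3
    then have "f (Suc n) \<le> 0" using assms(1) by simp
    then show ?thesis using Suc.IH by (simp add: sum.cl_ivl_Suc add_decreasing2)
  qed
qed

lemma sum_split_first_two:
  fixes f :: "nat \<Rightarrow> 'a::comm_monoid_add"
  assumes "\<And>i. n < i \<Longrightarrow> f i = 0"
  shows "sum f {1..n} = f 1 + f 2 + sum f {3..n}"
proof -
  consider "n = 0" | "n = 1" | "2 \<le> n" by linarith
  then show ?thesis
  proof cases
    case 3
    then have "{1..n} = insert 1 (insert 2 {3..n})" by auto
    then show ?thesis by (simp add: add.assoc)
  qed (use assms in auto)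
qed

lemma sum_mult_le_of_antitone:
  fixes e b :: "nat \<Rightarrow> int"
  assumes e_nonneg: "\<And>i. 0 \<le> e i" and e_le: "\<And>i. e i \<le> M" and e_sum: "sum e {1..n} \<le> 3 * M"
    and b_nonneg: "\<And>i. 0 \<le> b i" and b_antitone: "\<And>i j. 1 \<le> i \<Longrightarrow> i \<le> j \<Longrightarrow> b j \<le> b i"
    and b_sum: "b 1 + b 2 + b 3 \<le> a"
  shows "(\<Sum>i=1..n. e i * b i) \<le> M * a"
proof -
  have M_nonneg: "0 \<le> M" using e_nonneg e_le order_trans by blast
  have "(\<Sum>i=1..n. e i * b i) = b 3 * sum e {1..n} + (\<Sum>i=1..n. e i * (b i - b 3))"
    by (simp add: sum_distrib_left sum_subtractf algebra_simps)
  also have "\<dots> \<le> b 3 * (3 * M) + (e 1 * (b 1 - b 3) + e 2 * (b 2 - b 3))"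
  proof (intro add_mono mult_left_mono sum_le_first_two)
    show "e i * (b i - b 3) \<le> 0" if "3 \<le> i" for i
      using that by (intro mult_nonneg_nonpos) (simp_all add: e_nonneg b_antitone)
  qed (rule e_sum | simp add: b_nonneg e_nonneg b_antitone)+
  also have "\<dots> \<le> b 3 * (3 * M) + (M * (b 1 - b 3) + M * (b 2 - b 3))"
    by (intro add_mono mult_right_mono order_refl) (simp_all add: e_le b_antitone)
  also have "\<dots> = M * (b 1 + b 2 + b 3)" by (simp add: algebra_simps)
  also have "\<dots> \<le> M * a" using b_sum M_nonneg by (rule mult_left_mono)
  finally show ?thesis .
qed

lemma le_of_pronic_le:
  fixes x m :: int
  assumes "0 \<le> m" and "x * (x + 1) \<le> m * m + 3 * m"
  shows "x \<le> m"
proof (rule ccontr)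
  assume "\<not> x \<le> m"
  then have "(m + 1) * (m + 2) \<le> x * (x + 1)"
    using assms(1) by (intro mult_mono) auto
  then show False using assms(2) by (simp add: algebra_simps)
qed

text \<open>Cauchy-Schwarz in the form 0 \<le> \<Sum> (3e_i - m)^2 together with n \<le> 9.\<close>

lemma sum_le_of_sum_pronic_le:
  fixes e :: "nat \<Rightarrow> int"
  assumes "n \<le> 9" and "0 \<le> m" and pronic: "(\<Sum>i=1..n. e i * (e i + 1)) \<le> m * m + 3 * m"
  shows "sum e {1..n} \<le> 3 * m"
proof -
  define E where "E = sum e {1..n}"
  define S where "S = (\<Sum>i=1..n. e i * e i)"
  have "0 \<le> (\<Sum>i=1..n. (3 * e i - m) * (3 * e i - m))"
    by (rule sum_nonneg) simp
  also have "\<dots> = 9 * S - 6 * m * E + int n * (m * m)"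
    by (simp add: S_def E_def algebra_simps sum.distrib sum_subtractf sum_distrib_left)
  also have "\<dots> \<le> 9 * S - 6 * m * E + 9 * (m * m)"
    using assms(1) by (simp add: mult_right_mono)
  finally have "0 \<le> 9 * S - 6 * m * E + 9 * (m * m)" .
  moreover have "S + E \<le> m * m + 3 * m"
    using pronic by (simp add: S_def E_def algebra_simps sum.distrib)
  ultimately have "(6 * m + 9) * E \<le> (6 * m + 9) * (3 * m)"
    by (simp add: algebra_simps)
  then show ?thesis
    using assms(2) unfolding E_def by (simp add: mult_le_cancel_left)
qed

lemma odd_square_gt_bound:
  fixes c0 Z :: int
  assumes "odd c0" and "0 < c0" and "0 \<le> Z" and "even Z" and "4 * Z + 1 < c0 * c0"
  obtains m where "0 \<le> m" and "c0 = 2 * m + 3" and "Z \<le> m * m + 3 * m"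
proof -
  obtain k where k: "c0 = 2 * k + 1" using assms(1) by (rule oddE)
  define m where "m = k - 1"
  have "c0 \<noteq> 1" using assms(3,5) by auto
  then have "0 \<le> m" and c0: "c0 = 2 * m + 3" using k assms(2) by (simp_all add: m_def)
  have "Z < m * m + 3 * m + 2"
    using assms(5) by (simp add: c0 algebra_simps)
  moreover have "Z \<noteq> m * m + 3 * m + 1"
  proof
    assume "Z = m * m + 3 * m + 1"
    also have "\<dots> = m * (m + 1) + 2 * m + 1" by (simp add: algebra_simps)
    finally show False using assms(4) by simp
  qed
  ultimately have "Z \<le> m * m + 3 * m" by linarith
  with \<open>0 \<le> m\<close> c0 show thesis by (rule that)
qed

text \<open>The class 3H - E_1 - \<dots> - E_n, the first Chern class of the blow-up of CP^2 in n points.\<close>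

definition anticanonical_cls :: "nat \<Rightarrow> cls" where
  "anticanonical_cls n = (3, \<lambda>i. if i \<in> {1..n} then 1 else 0)"

lemma dot_anticanonical_cls: "dot n (anticanonical_cls n) A = 3 * fst A - sum (snd A) {1..n}"
proof -
  have "(\<Sum>i=1..n. snd (anticanonical_cls n) i * snd A i) = sum (snd A) {1..n}"
    by (rule sum.cong) (simp_all add: anticanonical_cls_def)
  moreover have "fst (anticanonical_cls n) = 3" by (simp add: anticanonical_cls_def)
  ultimately show ?thesis by (simp add: dot_def)
qed

lemma adjunction_class_anticanonical_cls: "adjunction_class n (anticanonical_cls n)"
  unfolding adjunction_class_def characteristic_def
proof (intro conjI allI impI)
  show "in_Gamma n (anticanonical_cls n)" by (simp add: in_Gamma_def anticanonical_cls_def)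
next
  fix A :: cls
  have "dot n (anticanonical_cls n) A - dot n A A
      = 2 * fst A - fst A * (fst A - 1) + (\<Sum>i=1..n. snd A i * (snd A i - 1))"
    by (simp add: dot_anticanonical_cls dot_def[of n A A] sum_subtractf algebra_simps)
  moreover have "even (\<Sum>i=1..n. snd A i * (snd A i - 1))" by (intro dvd_sum) simp
  ultimately have "even (dot n (anticanonical_cls n) A - dot n A A)" by simp
  then show "dot n (anticanonical_cls n) A mod 2 = dot n A A mod 2"
    by (simp add: mod_eq_dvd_iff)
next
  have "sum (snd (anticanonical_cls n)) {1..n} = int n"
    by (simp add: anticanonical_cls_def)
  then have "dot n (anticanonical_cls n) (anticanonical_cls n) = 9 - int n"
    unfolding dot_anticanonical_cls by (simp add: anticanonical_cls_def)
  then show "signature n < dot n (anticanonical_cls n) (anticanonical_cls n)"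
    by (simp add: signature_def)
qed

lemma characteristic_odd:
  assumes "characteristic n c"
  shows "odd (fst c)" and "\<And>i. i \<in> {1..n} \<Longrightarrow> odd (snd c i)"
proof -
  have char: "dot n c B mod 2 = dot n B B mod 2" if "in_Gamma n B" for B
    using assms that unfolding characteristic_def by blast
  have "dot n c (1, \<lambda>_. 0) mod 2 = dot n (1, \<lambda>_. 0) (1, \<lambda>_. 0) mod 2"
    by (rule char) (simp add: in_Gamma_def)
  then show "odd (fst c)" by (simp add: dot_def odd_iff_mod_2_eq_one)
  fix i assume i: "i \<in> {1..n}"
  define E :: cls where "E = (0, (\<lambda>_. 0)(i := 1))"
  have "dot n c E mod 2 = dot n E E mod 2"
    by (rule char) (use i in \<open>auto simp: in_Gamma_def E_def\<close>)
  moreover have "dot n c E = - snd c i" and "dot n E E = -1"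
    using i by (simp_all add: dot_def E_def if_distrib sum.delta cong: if_cong)
  ultimately have "(- snd c i) mod 2 = 1" by simp
  then show "odd (snd c i)" by (metis odd_iff_mod_2_eq_one dvd_minus_iff)
qed

lemma reduced_coeffs:
  assumes "in_Gamma n A" and "reduced n A"
  shows "\<And>i. 0 \<le> snd A i"
    and "\<And>i j. 1 \<le> i \<Longrightarrow> i \<le> j \<Longrightarrow> snd A j \<le> snd A i"
    and "snd A 1 + snd A 2 + snd A 3 \<le> fst A"
proof -
  have outside: "snd A i = 0" if "i = 0 \<or> n < i" for i
    using assms(1) that unfolding in_Gamma_def by blast
  have sorted: "snd A j \<le> snd A i" if "1 \<le> i" "i \<le> j" "j \<le> n" for i j
    using assms(2) that unfolding reduced_def Let_def by blast
  show nonneg: "0 \<le> snd A i" for i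
    using assms(2) outside[of i] unfolding reduced_def Let_def by (cases "i = 0 \<or> n < i") auto
  show "snd A j \<le> snd A i" if "1 \<le> i" "i \<le> j" for i j
    using sorted[OF that] outside[of j] nonneg[of i] that by (cases "n < j") auto
  show "snd A 1 + snd A 2 + snd A 3 \<le> fst A"
    using assms(2) outside[of 1] outside[of 2] outside[of 3] unfolding reduced_def Let_def
    by (auto split: if_splits)
qed

lemma anticanonical_dot_le_of_pos:
  fixes c0 a :: int and c b :: "nat \<Rightarrow> int"
  assumes "n \<le> 9" and "odd c0" and "0 < c0" and c_odd: "\<And>i. i \<in> {1..n} \<Longrightarrow> odd (c i)"
    and c_square: "1 - int n < c0 * c0 - (\<Sum>i=1..n. c i * c i)"
    and b_nonneg: "\<And>i. 0 \<le> b i" and b_antitone: "\<And>i j. 1 \<le> i \<Longrightarrow> i \<le> j \<Longrightarrow> b j \<le> b i"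
    and b_sum: "b 1 + b 2 + b 3 \<le> a"
  shows "3 * a - sum b {1..n} \<le> c0 * a - (\<Sum>i=1..n. c i * b i)"
proof -
  define e where "e i = (if i \<in> {1..n} then (\<bar>c i\<bar> - 1) div 2 else 0)" for i
  have abs_c: "\<bar>c i\<bar> = 2 * e i + 1" if "i \<in> {1..n}" for i
    using c_odd[OF that] that by (auto simp: e_def elim!: oddE)
  have e_nonneg: "0 \<le> e i" for i
    using c_odd by (fastforce simp: e_def pos_imp_zdiv_nonneg_iff)
  define Z where "Z = (\<Sum>i=1..n. e i * (e i + 1))"
  have "(\<Sum>i=1..n. c i * c i) = (\<Sum>i=1..n. 4 * (e i * (e i + 1)) + 1)"
  proof (rule sum.cong)
    show "c i * c i = 4 * (e i * (e i + 1)) + 1" if "i \<in> {1..n}" for i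
      using abs_c[OF that] abs_mult_self_eq[of "c i"] by (simp add: algebra_simps)
  qed simp
  then have "4 * Z + 1 < c0 * c0"
    using c_square by (simp add: Z_def sum.distrib sum_distrib_left)
  moreover have "0 \<le> Z" unfolding Z_def using e_nonneg by (intro sum_nonneg) simp
  moreover have "even Z" unfolding Z_def by (intro dvd_sum) simp
  ultimately obtain m where m: "0 \<le> m" "c0 = 2 * m + 3" and Z_le: "Z \<le> m * m + 3 * m"
    using odd_square_gt_bound assms(2,3) by metis
  have e_le: "e i \<le> m" for i
  proof (cases "i \<in> {1..n}")
    case True
    have "e i * (e i + 1) \<le> Z"
      unfolding Z_def using True e_nonneg by (intro member_le_sum) auto
    then show ?thesis using m(1) Z_le by (auto intro: le_of_pronic_le)
  qed (use m(1) in \<open>auto simp: e_def\<close>)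
  have "sum e {1..n} \<le> 3 * m"
    using assms(1) m(1) Z_le unfolding Z_def by (rule sum_le_of_sum_pronic_le)
  then have eb: "(\<Sum>i=1..n. e i * b i) \<le> m * a"
    by (rule sum_mult_le_of_antitone[OF e_nonneg e_le _ b_nonneg b_antitone b_sum])
  have "(\<Sum>i=1..n. c i * b i) \<le> (\<Sum>i=1..n. (2 * e i + 1) * b i)"
  proof (rule sum_mono)
    show "c i * b i \<le> (2 * e i + 1) * b i" if "i \<in> {1..n}" for i
      using abs_c[OF that] b_nonneg[of i] abs_ge_self[of "c i"] by (metis mult_right_mono)
  qed
  also have "\<dots> = 2 * (\<Sum>i=1..n. e i * b i) + sum b {1..n}"
    by (simp add: algebra_simps sum.distrib sum_distrib_left)
  finally show ?thesis using eb m(2) by (simp add: algebra_simps)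
qed

lemma anticanonical_dot_le_abs_dot:
  assumes "n \<le> 9" and "adjunction_class n c" and "in_Gamma n A" and "reduced n A"
  shows "dot n (anticanonical_cls n) A \<le> \<bar>dot n c A\<bar>"
proof -
  have char: "characteristic n c" and c_square: "1 - int n < fst c * fst c - (\<Sum>i=1..n. snd c i * snd c i)"
    using assms(2) by (simp_all add: adjunction_class_def signature_def dot_def)
  note bound = anticanonical_dot_le_of_pos[OF assms(1) _ _ _ _ reduced_coeffs[OF assms(3,4)]]
  have "fst c \<noteq> 0" using characteristic_odd(1)[OF char] by auto
  then consider "0 < fst c" | "0 < - fst c" by linarith
  then show ?thesis
  proof cases
    case 1
    then have "3 * fst A - sum (snd A) {1..n} \<le> dot n c A"
      unfolding dot_def using characteristic_odd[OF char] c_square by (intro bound)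
    then show ?thesis by (simp add: dot_anticanonical_cls)
  next
    case 2
    then have "3 * fst A - sum (snd A) {1..n} \<le> - fst c * fst A - (\<Sum>i=1..n. - snd c i * snd A i)"
      using characteristic_odd[OF char] c_square by (intro bound) simp_all
    also have "\<dots> = - dot n c A" by (simp add: dot_def sum_negf)
    finally show ?thesis by (simp add: dot_anticanonical_cls)
  qed
qed

lemma anticanonical_dot_nonneg:
  assumes "n \<le> 9" and "in_Gamma n A" and "reduced n A"
  shows "0 \<le> dot n (anticanonical_cls n) A"
proof -
  have "(\<Sum>i=1..n. 1 * snd A i) \<le> 3 * fst A"
    using assms(1) by (intro sum_mult_le_of_antitone reduced_coeffs[OF assms(2,3)]) simp_all
  then show ?thesis by (simp add: dot_anticanonical_cls)
qed

lemma h_eq_h_c_anticanonical: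
  assumes "n \<le> 9" and "in_Gamma n A" and "reduced n A"
  shows "h n A = h_c n (anticanonical_cls n) A"
  unfolding h_def
proof (rule Greatest_equality)
  show "\<exists>c. adjunction_class n c \<and> h_c n (anticanonical_cls n) A = h_c n c A"
    using adjunction_class_anticanonical_cls by blast
next
  fix k assume "\<exists>c. adjunction_class n c \<and> k = h_c n c A"
  then obtain c where "adjunction_class n c" and k: "k = h_c n c A" by blast
  then have "\<bar>dot n (anticanonical_cls n) A\<bar> \<le> \<bar>dot n c A\<bar>"
    using anticanonical_dot_le_abs_dot anticanonical_dot_nonneg assms by (metis abs_of_nonneg)
  then show "k \<le> h_c n (anticanonical_cls n) A"
    unfolding k h_c_def by (auto intro: zdiv_mono1)
qed

lemma two_h_eq:
  assumes "n \<le> 9" and "in_Gamma n A" and "reduced n A" and "A \<noteq> zero_cls"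
  shows "2 * h n A = fst A * fst A - 3 * fst A - (\<Sum>i=1..n. snd A i * (snd A i - 1)) + 2"
proof -
  have "dot n (anticanonical_cls n) A mod 2 = dot n A A mod 2"
    using adjunction_class_anticanonical_cls assms(2)
    unfolding adjunction_class_def characteristic_def by blast
  then have "even (dot n A A - dot n (anticanonical_cls n) A)"
    by (simp add: mod_eq_dvd_iff)
  then have "2 * h n A = dot n A A - dot n (anticanonical_cls n) A + 2"
    using anticanonical_dot_nonneg[OF assms(1-3)] assms(4)
    by (simp add: h_eq_h_c_anticanonical[OF assms(1-3)] h_c_def)
  then show ?thesis
    by (simp add: dot_anticanonical_cls dot_def[of n A A] sum_subtractf algebra_simps)
qed

text \<open>Here t stands for b_3, and X and Y for the sums over i \<ge> 3 of b_i(b_i - 1) and of b_i;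
  the last hypothesis is A \<cdot> A \<ge> 0.\<close>

lemma two_h_pos_of_gap:
  fixes a b1 b2 t X Y :: int
  assumes gap: "b1 + 2 \<le> a" and "1 \<le> b1" and "b2 \<le> b1" and "0 \<le> t" and "t \<le> b2"
    and sum3: "b1 + b2 + t \<le> a"
    and X_le: "X \<le> (t - 1) * Y" and "0 \<le> Y" and square: "X + Y \<le> a * a - b1 * b1 - b2 * b2"
  shows "0 < a * a - 3 * a - b1 * (b1 - 1) - b2 * (b2 - 1) - X + 2"
proof (cases "t \<le> 1")
  case True
  define d where "d = a - b1"
  have "X \<le> 0"
    using X_le True \<open>0 \<le> Y\<close> mult_nonpos_nonneg[of "t - 1" Y] by linarith
  moreover have "b2 * (b2 - 1) \<le> b1 * (d - 1)"
  proof (cases "b2 = 0")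
    case False
    then show ?thesis
      using assms(2-5) sum3 by (intro mult_mono) (simp_all add: d_def)
  qed (use assms(2) gap in \<open>simp add: d_def\<close>)
  moreover have "1 * 1 \<le> b1 * (d - 1)"
    using assms(2) gap by (intro mult_mono) (simp_all add: d_def)
  moreover have "0 \<le> (d - 1) * (d - 2)" using gap by (simp add: d_def)
  moreover have "a * a - 3 * a - b1 * (b1 - 1) - b2 * (b2 - 1) + 2
      = 2 * (b1 * (d - 1)) + (d - 1) * (d - 2) - b2 * (b2 - 1)"
    by (simp add: d_def algebra_simps)
  ultimately show ?thesis by linarith
next
  case False
  define P where "P = a * a - 3 * a - b1 * (b1 - 1) - b2 * (b2 - 1) + 2"
  define Q where "Q = a * a - b1 * b1 - b2 * b2"
  define u v w where "u = b2 - t" and "v = b1 - b2" and "w = a - b1 - 2 * t"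
  have "0 \<le> u" "0 \<le> v" "u \<le> w" using assms u_def v_def w_def by auto
  then have "0 \<le> 3 * t * w + u * t + 2 * u * w + 2 * v * (t + w) + (w - u) * (w + u)"
    using assms(4) by (intro add_nonneg_nonneg mult_nonneg_nonneg) auto
  \<comment> \<open>Substituting b2 = t + u, b1 = t + u + v, a = 3t + u + v + w turns t P - (t - 1) Q into
    a sum of nonnegative terms plus 2t.\<close>
  moreover have "t * P - (t - 1) * Q
      = 3 * t * w + u * t + 2 * u * w + 2 * v * (t + w) + (w - u) * (w + u) + 2 * t"
    unfolding P_def Q_def u_def v_def w_def by (simp add: algebra_simps)
  ultimately have "(t - 1) * Q < t * P" using False by linarith
  moreover have "t * X \<le> (t - 1) * Q"
  proof -
    have "(t - 1) * (X + Y) \<le> (t - 1) * Q"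
      using False square by (intro mult_left_mono) (simp_all add: Q_def)
    then show ?thesis using X_le by (simp add: algebra_simps)
  qed
  ultimately have "0 < t * (P - X)" by (simp add: algebra_simps)
  then show ?thesis using False by (simp add: P_def zero_less_mult_iff)
qed

lemma reduced_first_coeff_zero:
  assumes "in_Gamma n A" and "reduced n A" and "snd A 1 = 0"
  shows "snd A = (\<lambda>_. 0)"
proof
  fix i
  note coeffs = reduced_coeffs[OF assms(1,2)]
  show "snd A i = 0"
    using coeffs(1)[of i] coeffs(2)[of 1 i] assms by (cases "i = 0") (auto simp: in_Gamma_def)
qed

lemma reduced_gap_zero:
  assumes "in_Gamma n A" and "reduced n A" and "fst A = snd A 1"
  shows "A = mult_H_minus_E1 (fst A)"
proof -
  note coeffs = reduced_coeffs[OF assms(1,2)]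
  have "snd A 2 = 0" using coeffs(1)[of 2] coeffs(1)[of 3] coeffs(3) assms(3) by linarith
  then have "snd A i = 0" if "2 \<le> i" for i
    using coeffs(1)[of i] coeffs(2)[of 2 i] that by simp
  moreover have "snd A 0 = 0" using assms(1) by (simp add: in_Gamma_def)
  ultimately have "snd A i = ((\<lambda>_. 0)(1 := fst A)) i" for i
    using assms(3) by (cases "i \<le> 1") (auto simp: le_Suc_eq)
  then show ?thesis by (simp add: mult_H_minus_E1_def prod_eq_iff fun_eq_iff)
qed

lemma reduced_gap_one:
  assumes "in_Gamma n A" and "reduced n A" and "fst A = snd A 1 + 1"
  shows "snd A 2 \<in> {0, 1} \<and> (\<forall>i\<ge>3. snd A i = 0)"
proof -
  note coeffs = reduced_coeffs[OF assms(1,2)]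
  have "snd A 3 = 0" and "0 \<le> snd A 2" "snd A 2 \<le> 1"
    using coeffs(1)[of 2] coeffs(1)[of 3] coeffs(2)[of 2 3] coeffs(3) assms(3) by linarith+
  moreover have "snd A i = 0" if "3 \<le> i" for i
    using coeffs(1)[of i] coeffs(2)[OF _ that] \<open>snd A 3 = 0\<close> by (simp add: order_antisym)
  ultimately show ?thesis by auto
qed

lemma reduced_one_le_fst:
  assumes "in_Gamma n A" and "reduced n A" and "A \<noteq> zero_cls"
  shows "1 \<le> fst A"
proof (rule ccontr)
  note coeffs = reduced_coeffs[OF assms(1,2)]
  assume "\<not> 1 \<le> fst A"
  then have "fst A = 0" and "snd A 1 = 0"
    using coeffs(1)[of 1] coeffs(1)[of 2] coeffs(1)[of 3] coeffs(3) by linarith+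
  then show False
    using reduced_first_coeff_zero[OF assms(1,2) \<open>snd A 1 = 0\<close>] assms(3)
    by (simp add: zero_cls_def prod_eq_iff)
qed

lemma reduced_eq_named_cls_iff:
  assumes "in_Gamma n A" and "reduced n A"
  shows "A = mult_H_minus_E1 k \<longleftrightarrow> fst A = k \<and> snd A 1 = k"
    and "A = H_minus_E1 \<longleftrightarrow> fst A = 1 \<and> snd A 1 = 1"
    and "A = H_cls \<longleftrightarrow> fst A = 1 \<and> snd A 1 = 0"
    and "A = twoH_cls \<longleftrightarrow> fst A = 2 \<and> snd A 1 = 0"
proof -
  show mult: "A = mult_H_minus_E1 k \<longleftrightarrow> fst A = k \<and> snd A 1 = k" for k
    using reduced_gap_zero[OF assms] by (auto simp: mult_H_minus_E1_def)
  show "A = H_minus_E1 \<longleftrightarrow> fst A = 1 \<and> snd A 1 = 1"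
    using mult[of 1] by (simp add: H_minus_E1_def mult_H_minus_E1_def)
  have zero_coeffs_iff: "A = (a, \<lambda>_. 0) \<longleftrightarrow> fst A = a \<and> snd A 1 = 0" for a
  proof
    assume *: "fst A = a \<and> snd A 1 = 0"
    then have "snd A = (\<lambda>_. 0)" by (intro reduced_first_coeff_zero[OF assms]) simp
    with * show "A = (a, \<lambda>_. 0)" by (simp add: prod_eq_iff)
  qed simp
  show "A = H_cls \<longleftrightarrow> fst A = 1 \<and> snd A 1 = 0"
    unfolding H_cls_def by (rule zero_coeffs_iff)
  show "A = twoH_cls \<longleftrightarrow> fst A = 2 \<and> snd A 1 = 0"
    unfolding twoH_cls_def by (rule zero_coeffs_iff)
qed

lemma sum_coeff_pronic_split:
  assumes "in_Gamma n A"
  shows "(\<Sum>i=1..n. snd A i * (snd A i - 1))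
    = snd A 1 * (snd A 1 - 1) + snd A 2 * (snd A 2 - 1) + (\<Sum>i=3..n. snd A i * (snd A i - 1))"
  using assms by (intro sum_split_first_two) (simp add: in_Gamma_def)

lemma h_gap_zero:
  assumes "n \<le> 9" and "in_Gamma n A" and "reduced n A" and "A \<noteq> zero_cls"
    and "fst A = snd A 1"
  shows "h n A = 1 - fst A"
proof -
  have "snd A = (\<lambda>_. 0)(1 := fst A)"
    using reduced_gap_zero[OF assms(2,3,5)] by (metis mult_H_minus_E1_def snd_conv)
  then have "(\<Sum>i=1..n. snd A i * (snd A i - 1)) = fst A * (fst A - 1)"
    unfolding sum_coeff_pronic_split[OF assms(2)] by (simp add: sum.neutral)
  then show ?thesis using two_h_eq[OF assms(1-4)] by (simp add: algebra_simps)
qed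

lemma h_gap_one:
  assumes "n \<le> 9" and "in_Gamma n A" and "reduced n A" and "A \<noteq> zero_cls"
    and "fst A = snd A 1 + 1"
  shows "h n A = 0"
proof -
  have "(\<Sum>i=1..n. snd A i * (snd A i - 1)) = snd A 1 * (snd A 1 - 1)"
    unfolding sum_coeff_pronic_split[OF assms(2)] using reduced_gap_one[OF assms(2,3,5)]
    by (auto intro: sum.neutral)
  then show ?thesis using two_h_eq[OF assms(1-4)] assms(5) by (simp add: algebra_simps)
qed

lemma h_gap_large:
  assumes "n \<le> 9" and "in_Gamma n A" and "reduced n A" and "A \<noteq> zero_cls"
    and "0 \<le> dot n A A" and gap: "snd A 1 + 2 \<le> fst A"
  shows "if fst A = 2 \<and> snd A 1 = 0 then h n A = 0 else 0 < h n A"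
proof (cases "snd A 1 = 0")
  case True
  then have "2 * h n A = (fst A - 1) * (fst A - 2)"
    using two_h_eq[OF assms(1-4)] reduced_first_coeff_zero[OF assms(2,3) True] by (simp add: algebra_simps)
  moreover have "0 < (fst A - 1) * (fst A - 2)" if "fst A \<noteq> 2"
    using gap True that by (intro mult_pos_pos) auto
  ultimately show ?thesis using True by force
next
  case False
  note coeffs = reduced_coeffs[OF assms(2,3)]
  define X where "X = (\<Sum>i=3..n. snd A i * (snd A i - 1))"
  define Y where "Y = (\<Sum>i=3..n. snd A i)"
  have "snd A i * (snd A i - 1) \<le> (snd A 3 - 1) * snd A i" if "3 \<le> i" for i
    using mult_left_mono[of "snd A i - 1" "snd A 3 - 1" "snd A i"] coeffs(1)[of i] coeffs(2)[OF _ that]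
    by (simp add: mult.commute)
  then have "X \<le> (\<Sum>i=3..n. (snd A 3 - 1) * snd A i)"
    unfolding X_def by (intro sum_mono) simp
  then have "X \<le> (snd A 3 - 1) * Y" by (simp add: Y_def sum_distrib_left)
  moreover have "0 \<le> Y" unfolding Y_def using coeffs(1) by (intro sum_nonneg) simp
  moreover have "(\<Sum>i=1..n. snd A i * snd A i) = snd A 1 * snd A 1 + snd A 2 * snd A 2 + (X + Y)"
    using assms(2) unfolding X_def Y_def
    by (subst sum_split_first_two) (simp_all add: in_Gamma_def sum_subtractf algebra_simps)
  then have "X + Y \<le> fst A * fst A - snd A 1 * snd A 1 - snd A 2 * snd A 2"
    using assms(5) by (simp add: dot_def)
  ultimately have "0 < fst A * fst A - 3 * fst A - snd A 1 * (snd A 1 - 1) - snd A 2 * (snd A 2 - 1) - X + 2"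
    using gap False coeffs(1)[of 1] coeffs(1)[of 3] coeffs(2)[of 1 2] coeffs(2)[of 2 3] coeffs(3)
    by (intro two_h_pos_of_gap) auto
  then show ?thesis
    using two_h_eq[OF assms(1-4)] sum_coeff_pronic_split[OF assms(2)] False by (simp add: X_def)
qed

theorem mainTheorem11:
  fixes n :: nat and A :: cls
  assumes "n \<le> 9"
    and "in_Gamma n A"
    and "A \<noteq> zero_cls"
    and "reduced n A"
    and "dot n A A \<ge> 0"
  shows "(h n A = 0 \<longleftrightarrow>
            (A \<in> {H_minus_E1, H_cls, twoH_cls} \<or>
             (fst A = snd A 1 + 1 \<and> snd A 1 \<ge> 1 \<and> snd A 2 \<in> {0, 1} \<and>
              (\<forall>i\<ge>3. snd A i = 0))))
       \<and> (h n A < 0 \<longleftrightarrow> (\<exists>k\<ge>2. A = mult_H_minus_E1 k))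
       \<and> (\<not> (A \<in> {H_minus_E1, H_cls, twoH_cls} \<or>
               (fst A = snd A 1 + 1 \<and> snd A 1 \<ge> 1 \<and> snd A 2 \<in> {0, 1} \<and>
                (\<forall>i\<ge>3. snd A i = 0)))
          \<and> \<not> (\<exists>k\<ge>2. A = mult_H_minus_E1 k) \<longrightarrow> h n A > 0)"
proof -
  note named_iff = reduced_eq_named_cls_iff[OF assms(2,4)]
  note coeffs = reduced_coeffs[OF assms(2,4)]
  have "0 \<le> snd A 1" and "snd A 1 \<le> fst A"
    using coeffs(1)[of 1] coeffs(1)[of 2] coeffs(1)[of 3] coeffs(3) by linarith+
  have "1 \<le> fst A" by (rule reduced_one_le_fst[OF assms(2,4,3)])
  note unfold_named = insert_iff empty_iff named_iff
  consider (gap0) "fst A = snd A 1" | (gap1) "fst A = snd A 1 + 1" | (gap2) "snd A 1 + 2 \<le> fst A"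
    using \<open>snd A 1 \<le> fst A\<close> by linarith
  then show ?thesis
  proof cases
    case gap0
    then show ?thesis
      unfolding unfold_named using h_gap_zero[OF assms(1,2,4,3) gap0] \<open>1 \<le> fst A\<close> by auto
  next
    case gap1
    then show ?thesis
      unfolding unfold_named
      using h_gap_one[OF assms(1,2,4,3) gap1] reduced_gap_one[OF assms(2,4) gap1] \<open>0 \<le> snd A 1\<close>
      by auto
  next
    case gap2
    then show ?thesis unfolding unfold_named using h_gap_large[OF assms(1,2,4,3,5) gap2]
      by (auto split: if_splits)
  qed
qed

end
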